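(* Let $0<p<\frac12$, $\varepsilon=\frac12-p$, and let $k\ge1$. Suppose a fixed comparison query is asked $k$ times, each answer being independently correct with probability $1-p$ and the opposite with probability $p$; let $X$ be the number of "$<$" answers and $Y=k-X$ the number of "$>$" answers, and let $$R=\frac{(1-p)^Xp^Y+(1-p)^Yp^X}{2}.$$ Then for every constant $c>0$ there is a constant $C'$ such that whenever $k\le c\,\varepsilon^{-2}$, $$\mathbb{E}[R]\le\frac{1}{2^k}\left(1+C'\varepsilon^4k^2\right).$$ Equivalently, for an epoch of length $k=\mathcal{O}(\varepsilon^{-2})$ starting at step $\tau$, the coupled process satisfies $\mathbb{E}[W_{\tau+k}]\le 2^{-k}(1+\mathcal{O}(\varepsilon^4k^2))W_\tau$, where $W_{\tau+k}=W_\tau\cdot R$.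
   Context: Binary search with comparison queries on a linear order: querying $q$, the correct answer is "$<$" if the target is smaller than $q$ and "$>$" otherwise. The coupled process $W$ is updated at the end of an epoch (a block of $k$ repeated queries to the same element) starting at step $\tau$ by $W_{\tau+k}=W_\tau\frac{(1-p)^Xp^Y+(1-p)^Yp^X}{2}$, with $X,Y$ the numbers of "$<$" and "$>$" answers in the epoch. *)

theory Defs
  imports "HOL-Probability.Probability"
begin

definition epoch_R :: "real \<Rightarrow> nat \<Rightarrow> nat \<Rightarrow> real" where
  "epoch_R p k X = ((1 - p) ^ X * p ^ (k - X) + (1 - p) ^ (k - X) * p ^ X) / 2"

text \<open>Distribution of X: each of the k independent answers is "<" with probability
  1 - p if the target is smaller than the queried element (correct answer "<"),
  and with probability p otherwise.\<close>
definition answers_less_dist :: "real \<Rightarrow> nat \<Rightarrow> bool \<Rightarrow> nat pmf" where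
  "answers_less_dist p k target_smaller =
     binomial_pmf k (if target_smaller then 1 - p else p)"

end

theory Submission
  imports Defs
begin

text \<open>Both terms of \<open>R\<close> are binomial moments, so \<open>E[R]\<close> has the closed form
  \<open>((1 + a)^k + (1 - a)^k) / 2^(k+1)\<close> with \<open>a = (1 - 2p)^2 = 4\<epsilon>^2\<close>, whatever the correct
  answer is. In \<open>(1 + a)^k + (1 - a)^k\<close> the linear terms cancel, leaving
  \<open>2 + O((k a)^2 (1 + a)^k)\<close>, and \<open>(1 + a)^k \<le> exp (k a)\<close> is bounded by a constant because
  \<open>k a = 4 \<epsilon>^2 k \<le> 4 c\<close>.\<close>

lemma expectation_binomial_pmf_power_mult:
  fixes x y :: real
  assumes "r \<in> {0..1}"
  shows "measure_pmf.expectation (binomial_pmf k r) (\<lambda>X. x ^ X * y ^ (k - X))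
           = (r * x + (1 - r) * y) ^ k"
proof -
  have "measure_pmf.expectation (binomial_pmf k r) (\<lambda>X. x ^ X * y ^ (k - X))
      = (\<Sum>j\<le>k. (real (k choose j) * r ^ j * (1 - r) ^ (k - j)) * (x ^ j * y ^ (k - j)))"
    using assms by (simp add: expectation_binomial_pmf')
  also have "\<dots> = (\<Sum>j\<le>k. real (k choose j) * (r * x) ^ j * ((1 - r) * y) ^ (k - j))"
    by (intro sum.cong refl) (simp add: power_mult_distrib mult_ac)
  also have "\<dots> = (r * x + (1 - r) * y) ^ k"
    by (simp add: binomial_ring)
  finally show ?thesis .
qed

lemma expectation_epoch_R:
  assumes "0 \<le> p" "p \<le> 1"
  shows "measure_pmf.expectation (answers_less_dist p k b) (epoch_R p k)
           = ((1 + (1 - 2 * p)^2) ^ k + (1 - (1 - 2 * p)^2) ^ k) / 2 ^ Suc k"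
proof -
  define r where "r = (if b then 1 - p else p)"
  define a where "a = (1 - 2 * p)^2"
  have r: "r \<in> {0..1}"
    using assms by (auto simp: r_def)
  have integrable: "integrable (measure_pmf (binomial_pmf k r)) f" for f :: "nat \<Rightarrow> real"
    using r by (intro integrable_measure_pmf_finite) auto
  have "r * (1 - p) + (1 - r) * p = (if b then (1 + a) / 2 else (1 - a) / 2)"
       "r * p + (1 - r) * (1 - p) = (if b then (1 - a) / 2 else (1 + a) / 2)"
    by (simp_all add: r_def a_def power2_eq_square field_simps)
  then have means: "(r * (1 - p) + (1 - r) * p) ^ k + (r * p + (1 - r) * (1 - p)) ^ k
                      = ((1 + a) / 2) ^ k + ((1 - a) / 2) ^ k"
    by simp
  have "measure_pmf.expectation (answers_less_dist p k b) (epoch_R p k)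
      = (measure_pmf.expectation (binomial_pmf k r) (\<lambda>X. (1 - p) ^ X * p ^ (k - X))
         + measure_pmf.expectation (binomial_pmf k r) (\<lambda>X. p ^ X * (1 - p) ^ (k - X))) / 2"
    unfolding answers_less_dist_def epoch_R_def r_def[symmetric]
    by (subst Bochner_Integration.integral_add[symmetric]) (auto simp: integrable mult_ac)
  also have "\<dots> = (((1 + a) / 2) ^ k + ((1 - a) / 2) ^ k) / 2"
    using means by (simp add: expectation_binomial_pmf_power_mult[OF r])
  also have "\<dots> = ((1 + a) ^ k + (1 - a) ^ k) / 2 ^ Suc k"
    unfolding power_divide by (simp add: field_simps)
  finally show ?thesis
    by (simp add: a_def)
qed

lemma one_plus_power_diff_le:
  fixes a :: real
  assumes "0 \<le> a"
  shows "(1 + a) ^ k - (1 - a) ^ k \<le> 2 * k * a * (1 + a) ^ k"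
proof (induction k)
  case 0
  then show ?case by simp
next
  case (Suc k)
  have "(1 - a) ^ k \<le> \<bar>1 - a\<bar> ^ k"
    by (metis power_abs abs_ge_self)
  also have "\<dots> \<le> (1 + a) ^ k"
    using assms by (intro power_mono) auto
  also have "\<dots> \<le> (1 + a) * (1 + a) ^ k"
    using assms by (simp add: mult_le_cancel_right1)
  finally have minus_le: "(1 - a) ^ k \<le> (1 + a) * (1 + a) ^ k" .
  have "(1 + a) ^ Suc k - (1 - a) ^ Suc k
      = (1 + a) * ((1 + a) ^ k - (1 - a) ^ k) + 2 * a * (1 - a) ^ k"
    by (simp add: algebra_simps)
  also have "\<dots> \<le> (1 + a) * (2 * k * a * (1 + a) ^ k) + 2 * a * ((1 + a) * (1 + a) ^ k)"
    using Suc.IH minus_le assms by (intro add_mono mult_left_mono) auto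
  also have "\<dots> = 2 * real (Suc k) * a * (1 + a) ^ Suc k"
    by (simp add: algebra_simps)
  finally show ?case .
qed

lemma one_plus_power_add_one_minus_power_le:
  fixes a :: real
  assumes "0 \<le> a"
  shows "(1 + a) ^ k + (1 - a) ^ k \<le> 2 + (k * a)^2 * (1 + a) ^ k"
proof (induction k)
  case 0
  then show ?case by simp
next
  case (Suc k)
  define u where "u = (1 + a) ^ k"
  define v where "v = (1 - a) ^ k"
  have "0 \<le> u"
    using assms by (simp add: u_def)
  have "a * (u - v) \<le> a * (2 * k * a * u)"
    using one_plus_power_diff_le[OF assms, of k] assms
    by (intro mult_left_mono) (auto simp: u_def v_def)
  moreover have "u + v \<le> 2 + (k * a)^2 * u"
    using Suc.IH by (simp add: u_def v_def)
  moreover have "(1 + a) ^ Suc k + (1 - a) ^ Suc k = (u + v) + a * (u - v)"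
    by (simp add: u_def v_def algebra_simps)
  ultimately have "(1 + a) ^ Suc k + (1 - a) ^ Suc k \<le> 2 + (k * a)^2 * u + a * (2 * k * a * u)"
    by linarith
  also have "\<dots> \<le> 2 + (Suc k * a)^2 * u"
    using \<open>0 \<le> u\<close> assms by (simp add: power2_eq_square algebra_simps)
  also have "\<dots> \<le> 2 + (Suc k * a)^2 * ((1 + a) * u)"
    using \<open>0 \<le> u\<close> assms by (intro add_left_mono mult_left_mono) (auto simp: algebra_simps)
  finally show ?case
    by (simp add: u_def)
qed

lemma one_plus_power_le_exp:
  fixes a :: real
  assumes "-1 \<le> a"
  shows "(1 + a) ^ k \<le> exp (k * a)"
proof -
  have "(1 + a) ^ k \<le> exp a ^ k"
    using assms by (intro power_mono) auto
  then show ?thesis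
    by (simp add: exp_of_nat_mult)
qed

lemma one_plus_power_add_one_minus_power_le_exp:
  fixes a B :: real
  assumes "0 \<le> a" "k * a \<le> B"
  shows "(1 + a) ^ k + (1 - a) ^ k \<le> 2 + (k * a)^2 * exp B"
proof -
  have "(1 + a) ^ k \<le> exp B"
    using one_plus_power_le_exp[of a k] assms by (smt (verit) exp_le_cancel_iff)
  then have "(k * a)^2 * (1 + a) ^ k \<le> (k * a)^2 * exp B"
    by (simp add: mult_left_mono)
  then show ?thesis
    using one_plus_power_add_one_minus_power_le[OF assms(1), of k] by linarith
qed

theorem lemma9:
  fixes c :: real
  assumes "c > 0"
  shows "\<exists>C' :: real. \<forall>(p :: real) (k :: nat) (target_smaller :: bool).
           0 < p \<and> p < 1/2 \<and> k \<ge> 1 \<and> real k \<le> c / (1/2 - p) ^ 2 \<longrightarrow>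
           measure_pmf.expectation (answers_less_dist p k target_smaller) (\<lambda>X. epoch_R p k X)
             \<le> (1 / 2 ^ k) * (1 + C' * (1/2 - p) ^ 4 * (real k) ^ 2)"
proof (intro exI[of _ "8 * exp (4 * c)"] allI impI)
  fix p :: real and k :: nat and b :: bool
  assume "0 < p \<and> p < 1/2 \<and> k \<ge> 1 \<and> real k \<le> c / (1/2 - p) ^ 2"
  then have p: "0 < p" "p < 1/2" and k: "real k * (1/2 - p)^2 \<le> c"
    by (auto simp: pos_le_divide_eq)
  define a where "a = (1 - 2 * p)^2"
  have a: "0 \<le> a" "a = 4 * (1/2 - p)^2"
    by (simp add: a_def, simp add: a_def power2_eq_square algebra_simps)
  have "measure_pmf.expectation (answers_less_dist p k b) (\<lambda>X. epoch_R p k X)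
      = ((1 + a) ^ k + (1 - a) ^ k) / 2 ^ Suc k"
    using p by (simp add: expectation_epoch_R a_def)
  also have "\<dots> \<le> (2 + (k * a)^2 * exp (4 * c)) / 2 ^ Suc k"
    using a k by (intro divide_right_mono one_plus_power_add_one_minus_power_le_exp) auto
  also have "\<dots> = (1 / 2 ^ k) * (1 + 8 * exp (4 * c) * (1/2 - p) ^ 4 * (real k) ^ 2)"
    by (simp add: a power2_eq_square power4_eq_xxxx field_simps)
  finally show "measure_pmf.expectation (answers_less_dist p k b) (\<lambda>X. epoch_R p k X)
      \<le> (1 / 2 ^ k) * (1 + 8 * exp (4 * c) * (1/2 - p) ^ 4 * (real k) ^ 2)" .
qed

end
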